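(* The map $R$ is Lebesgue measurable. Every fiber $R^{-1}(y)$, $y\in[0,1]$, is non-empty and has a maximum element $S(y)$, and $S([0,1])\subset[0,1]\setminus\mathscr N$; in particular $S([0,1])$ has Lebesgue measure zero, and $R\circ S=\mathrm{id}_{[0,1]}$. Consequently $R$ is not bi-measurable: there exists a Lebesgue-null set $E\subset[0,1]$ such that $R(E)$ is not Lebesgue measurable.
   Context: Define $\rho$ on binary words: for $b=b_1b_2\dots$, $\rho(b)$ is obtained by deleting every digit $b_n=0$ and replacing every $b_n=1$ by $0$ if $n$ is odd and by $1$ if $n$ is even. For $x\in(0,1]$ let $\beta(x)$ be the unique binary expansion of $x$ with infinitely many $1$'s. Define $R:[0,1]\to[0,1]$ by $R(0)=2/3$ and, for $x\in(0,1]$, $R(x)=\sum_{n\ge1}c_n2^{-n}$ where $c=\rho(\beta(x))$. $\mathscr N\subset[0,1]$ denotes the set of numbers normal in base $2$ (every binary word of length $k$ occurs in the binary expansion with asymptotic frequency $2^{-k}$, for every $k\ge1$). *)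

theory Defs
  imports "HOL-Analysis.Analysis" "HOL-Library.Infinite_Set"
begin

text \<open>Binary words are infinite sequences \<open>nat \<Rightarrow> bool\<close>, indexed from 0:
  position i here corresponds to the paper's digit b_(i+1).\<close>

definition bin_val :: "(nat \<Rightarrow> bool) \<Rightarrow> real" where
  "bin_val b = (\<Sum>n. (if b n then 1 else 0) / 2 ^ (Suc n))"

definition beta :: "real \<Rightarrow> (nat \<Rightarrow> bool)" where
  "beta x = (THE b. bin_val b = x \<and> infinite {n. b n})"

text \<open>rho on words with infinitely many 1's: delete the 0 digits and replace
  the 1 at (paper) position n by 0 if n is odd and by 1 if n is even.
  The k-th surviving digit (0-indexed) comes from the k-th 1, at 0-indexed
  position p = enumerate {n. b n} k, i.e. paper position p+1; it becomes 1
  iff p+1 is even iff p is odd.\<close>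
definition rho :: "(nat \<Rightarrow> bool) \<Rightarrow> (nat \<Rightarrow> bool)" where
  "rho b = (\<lambda>k. odd (enumerate {n. b n} k))"

definition R :: "real \<Rightarrow> real" where
  "R x = (if x = 0 then 2/3 else bin_val (rho (beta x)))"

definition digits :: "real \<Rightarrow> (nat \<Rightarrow> bool)" where
  "digits x = (if x = 0 then (\<lambda>_. False) else beta x)"

definition normal2 :: "real set" where
  "normal2 = {x \<in> {0..1}. \<forall>k\<ge>1. \<forall>w::bool list. length w = k \<longrightarrow>
      ((\<lambda>N. real (card {i. i < N \<and> (\<forall>j<k. digits x (i + j) = w ! j)}) / real N)
        \<longlonglongrightarrow> 1 / 2 ^ k)}"

definition S :: "real \<Rightarrow> real" where
  "S y = (GREATEST x. x \<in> {0..1} \<and> R x = y)"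

end

theory Submission
  imports Defs
begin

(* For x in (0, 1], the word rho (beta x) records the parities of the positions of the 1's of beta x.
   Given a target word c, placing each 1 at the first position after the previous one with the
   required parity gives positions that are pointwise minimal among all admissible choices, hence
   the largest x with rho (beta x) = c. A real y has at most two binary expansions, so the fiber of
   R over y has a maximum S y, which is such a greedy value. Greedy positions never leave two
   consecutive places empty, so the expansion of S y contains no block 00: S y is not normal, and
   S([0, 1]) lies in the set of values of words without 00, which is covered by 3^n intervals of
   length 4^-n. Since R (S y) = y, R maps the null set S(V), V a Vitali set, onto V. *)

section \<open>Binary expansions\<close>

definition bin_term :: "(nat \<Rightarrow> bool) \<Rightarrow> nat \<Rightarrow> real" where
  "bin_term b n = (if b n then 1 else 0) / 2 ^ Suc n"

lemma bin_term_nonneg: "0 \<le> bin_term b n"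
  by (simp add: bin_term_def)

lemma bin_term_le: "bin_term b n \<le> (1/2) ^ Suc n"
  by (simp add: bin_term_def power_divide)

lemma summable_bin_term: "summable (bin_term b)"
  by (rule summable_comparison_test'[OF sums_summable[OF power_half_series], where N=0])
    (metis bin_term_le bin_term_nonneg real_norm_def abs_of_nonneg)

lemma bin_val_eq_suminf: "bin_val b = (\<Sum>n. bin_term b n)"
  by (simp add: bin_val_def bin_term_def)

lemma bin_val_nonneg: "0 \<le> bin_val b"
  unfolding bin_val_eq_suminf by (rule suminf_nonneg[OF summable_bin_term bin_term_nonneg])

lemma bin_val_le_1: "bin_val b \<le> 1"
proof -
  have "bin_val b \<le> (\<Sum>n. (1/2) ^ Suc n)"
    unfolding bin_val_eq_suminf
    by (rule suminf_le[OF bin_term_le summable_bin_term sums_summable[OF power_half_series]])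
  then show ?thesis
    using sums_unique[OF power_half_series, symmetric] by simp
qed

lemma bin_val_pos: "b j \<Longrightarrow> 0 < bin_val b"
  unfolding bin_val_eq_suminf
  by (rule suminf_pos2[OF summable_bin_term bin_term_nonneg, where i=j]) (simp add: bin_term_def)

lemma bin_val_add_complement: "bin_val b + bin_val (\<lambda>n. \<not> b n) = 1"
proof -
  have "bin_val b + bin_val (\<lambda>n. \<not> b n) = (\<Sum>n. bin_term b n + bin_term (\<lambda>n. \<not> b n) n)"
    unfolding bin_val_eq_suminf by (rule suminf_add[OF summable_bin_term summable_bin_term])
  also have "(\<lambda>n. bin_term b n + bin_term (\<lambda>n. \<not> b n) n) = (\<lambda>n. (1/2) ^ Suc n)"
    by (auto simp: bin_term_def power_divide)
  finally show ?thesis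
    using sums_unique[OF power_half_series, symmetric] by simp
qed

lemma bin_val_less_1: "\<not> b j \<Longrightarrow> bin_val b < 1"
  using bin_val_add_complement[of b] bin_val_pos[of "\<lambda>n. \<not> b n" j] by simp

lemma bin_val_shift: "bin_val b = (if b 0 then 1/2 else 0) + bin_val (\<lambda>n. b (Suc n)) / 2"
proof -
  have "bin_val (\<lambda>n. b (Suc n)) = (\<Sum>n. 2 * bin_term b (Suc n))"
    unfolding bin_val_eq_suminf by (rule arg_cong[where f=suminf]) (auto simp: bin_term_def)
  also have "\<dots> = 2 * (\<Sum>n. bin_term b (Suc n))"
    by (rule suminf_mult) (simp add: summable_bin_term summable_Suc_iff)
  also have "(\<Sum>n. bin_term b (Suc n)) = bin_val b - bin_term b 0"
    unfolding bin_val_eq_suminf by (rule suminf_split_head[OF summable_bin_term])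
  finally have "bin_val (\<lambda>n. b (Suc n)) = 2 * (bin_val b - bin_term b 0)" .
  then have "bin_val b = bin_term b 0 + bin_val (\<lambda>n. b (Suc n)) / 2"
    by (simp add: field_simps)
  then show ?thesis
    by (simp add: bin_term_def)
qed

lemma bin_val_less:
  assumes "b n" "\<not> b' n" "\<forall>i<n. b i = b' i" "(\<exists>j>n. b j) \<or> (\<exists>j>n. \<not> b' j)"
  shows "bin_val b' < bin_val b"
  using assms
proof (induction n arbitrary: b b')
  case 0
  let ?t = "\<lambda>n. b (Suc n)" and ?t' = "\<lambda>n. b' (Suc n)"
  have "0 < bin_val ?t \<or> bin_val ?t' < 1"
    using "0.prems"(4)
  proof (elim disjE exE conjE)
    fix j assume "0 < j" "b j"
    then show ?thesis using bin_val_pos[of ?t "j - 1"] by simp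
  next
    fix j assume "0 < j" "\<not> b' j"
    then show ?thesis using bin_val_less_1[of ?t' "j - 1"] by simp
  qed
  moreover have "bin_val b = 1/2 + bin_val ?t / 2" "bin_val b' = bin_val ?t' / 2"
    using "0.prems"(1,2) bin_val_shift[of b] bin_val_shift[of b'] by simp_all
  ultimately show ?case
    using bin_val_nonneg[of ?t] bin_val_le_1[of ?t'] by linarith
next
  case (Suc n)
  let ?t = "\<lambda>n. b (Suc n)" and ?t' = "\<lambda>n. b' (Suc n)"
  have "(\<exists>j>n. ?t j) \<or> (\<exists>j>n. \<not> ?t' j)"
    using Suc.prems(4)
  proof (elim disjE exE conjE)
    fix j assume "Suc n < j" "b j"
    then show ?thesis by (intro disjI1 exI[of _ "j - 1"]) simp
  next
    fix j assume "Suc n < j" "\<not> b' j"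
    then show ?thesis by (intro disjI2 exI[of _ "j - 1"]) simp
  qed
  then have "bin_val ?t' < bin_val ?t"
    using Suc.prems(1-3) by (intro Suc.IH) auto
  moreover have "b 0 = b' 0"
    using Suc.prems(3) by blast
  ultimately show ?case
    by (subst (1 2) bin_val_shift) simp
qed

lemma bin_val_inj:
  assumes "bin_val b = bin_val b'" and "finite {n. b n} \<longleftrightarrow> finite {n. b' n}"
  shows "b = b'"
proof -
  have less: "bin_val b' < bin_val b"
    if "b n" "\<not> b' n" "\<forall>i<n. b i = b' i" "finite {n. b n} \<longleftrightarrow> finite {n. b' n}" for b b' n
  proof (rule bin_val_less[OF that(1-3)])
    show "(\<exists>j>n. b j) \<or> (\<exists>j>n. \<not> b' j)"
    proof (cases "finite {n. b' n}")
      case True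
      then obtain m where "\<forall>i. b' i \<longrightarrow> i \<le> m"
        unfolding finite_nat_set_iff_bounded_le by blast
      then show ?thesis
        by (intro disjI2 exI[of _ "Suc (max n m)"]) auto
    next
      case False
      then have "infinite {n. b n}"
        using that(4) by simp
      then show ?thesis
        unfolding infinite_nat_iff_unbounded by auto
    qed
  qed
  show ?thesis
  proof (rule ccontr)
    assume "b \<noteq> b'"
    then obtain m where "b m \<noteq> b' m"
      by blast
    define n where "n = (LEAST n. b n \<noteq> b' n)"
    have "b n \<noteq> b' n"
      unfolding n_def by (rule LeastI[of _ m]) fact
    moreover have "\<forall>i<n. b i = b' i"
      using not_less_Least unfolding n_def by blast
    ultimately have "bin_val b' < bin_val b \<or> bin_val b < bin_val b'"
      using less[of b n b'] less[of b' n b] assms(2) by (cases "b n") simp_all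
    then show False
      using assms(1) by simp
  qed
qed

lemma finite_bin_val_fiber: "finite {b. bin_val b = y}"
proof (rule inj_on_finite[where f = "\<lambda>b. finite {n. b n}" and B = UNIV])
  show "inj_on (\<lambda>b. finite {n. b n}) {b. bin_val b = y}"
    by (rule inj_onI) (rule bin_val_inj; simp)
qed simp_all

definition dyadic_below :: "real \<Rightarrow> nat \<Rightarrow> int" where
  "dyadic_below x n = \<lceil>2 ^ n * x\<rceil> - 1"

definition bin_digit :: "real \<Rightarrow> nat \<Rightarrow> bool" where
  "bin_digit x n \<longleftrightarrow> odd (dyadic_below x (Suc n))"

lemma dyadic_below_bounds:
  "of_int (dyadic_below x n) < 2 ^ n * x" "2 ^ n * x \<le> of_int (dyadic_below x n) + 1"
  using ceiling_correct[of "2 ^ n * x"] unfolding dyadic_below_def by auto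

lemma dyadic_below_0: "0 < x \<Longrightarrow> x \<le> 1 \<Longrightarrow> dyadic_below x 0 = 0"
  unfolding dyadic_below_def by (simp add: ceiling_eq_iff)

lemma dyadic_below_Suc:
  "dyadic_below x (Suc n) = 2 * dyadic_below x n + (if bin_digit x n then 1 else 0)"
proof -
  have "of_int (2 * dyadic_below x n) < of_int (dyadic_below x (Suc n)) + (1::real)"
    "of_int (dyadic_below x (Suc n)) < (of_int (2 * dyadic_below x n + 2) :: real)"
    using dyadic_below_bounds[where x=x and n=n] dyadic_below_bounds[where x=x and n="Suc n"] by simp_all
  then have "2 * dyadic_below x n \<le> dyadic_below x (Suc n)"
    "dyadic_below x (Suc n) \<le> 2 * dyadic_below x n + 1"
    by linarith+
  then show ?thesis
    unfolding bin_digit_def by (cases "dyadic_below x (Suc n) = 2 * dyadic_below x n") auto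
qed

lemma sum_bin_term_bin_digit:
  assumes "0 < x" "x \<le> 1"
  shows "(\<Sum>i<n. bin_term (bin_digit x) i) = of_int (dyadic_below x n) / 2 ^ n"
proof (induction n)
  case 0
  show ?case using dyadic_below_0[OF assms] by simp
next
  case (Suc n)
  then show ?case
    by (simp add: dyadic_below_Suc bin_term_def field_simps)
qed

lemma dyadic_below_tendsto: "(\<lambda>n. of_int (dyadic_below x n) / 2 ^ n) \<longlonglongrightarrow> x"
proof (rule tendsto_sandwich[of "\<lambda>n. x - (1/2) ^ n" _ _ "\<lambda>n. x"])
  show "\<forall>\<^sub>F n in sequentially. x - (1/2) ^ n \<le> of_int (dyadic_below x n) / 2 ^ n"
  proof (intro always_eventually allI)
    fix n
    have "x \<le> (of_int (dyadic_below x n) + 1) / 2 ^ n"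
      using dyadic_below_bounds(2)[where x=x and n=n] by (simp add: field_simps)
    then show "x - (1/2) ^ n \<le> of_int (dyadic_below x n) / 2 ^ n"
      by (simp add: add_divide_distrib power_divide)
  qed
  show "\<forall>\<^sub>F n in sequentially. of_int (dyadic_below x n) / 2 ^ n \<le> x"
    using dyadic_below_bounds(1)[where x=x] by (simp add: field_simps less_imp_le)
  show "(\<lambda>n. x - (1/2) ^ n) \<longlonglongrightarrow> x"
    by (intro tendsto_eq_intros LIMSEQ_power_zero) auto
qed simp

lemma bin_val_bin_digit: "0 < x \<Longrightarrow> x \<le> 1 \<Longrightarrow> bin_val (bin_digit x) = x"
  unfolding bin_val_eq_suminf
  by (rule sums_unique[symmetric]) (simp add: sums_def sum_bin_term_bin_digit dyadic_below_tendsto)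

text \<open>Because \<open>dyadic_below x n\<close> is strictly below \<open>2 ^ n * x\<close>, a tail of 0 digits would make the
  dyadic approximations constant and hence equal to \<open>x\<close>.\<close>

lemma infinite_bin_digit: "infinite {n. bin_digit x n}"
proof
  assume "finite {n. bin_digit x n}"
  then obtain N where N: "\<forall>n\<in>{n. bin_digit x n}. n < N"
    unfolding finite_nat_set_iff_bounded by blast
  have const: "of_int (dyadic_below x (m + N)) / 2 ^ (m + N) = of_int (dyadic_below x N) / (2 ^ N :: real)" for m
  proof (induction m)
    case (Suc m)
    have "\<not> bin_digit x (m + N)"
      using N by auto
    then show ?case
      using Suc by (simp add: dyadic_below_Suc)
  qed simp
  have "(\<lambda>m. of_int (dyadic_below x (m + N)) / 2 ^ (m + N)) \<longlonglongrightarrow> x"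
    using LIMSEQ_ignore_initial_segment[OF dyadic_below_tendsto] .
  then have "of_int (dyadic_below x N) / 2 ^ N = x"
    unfolding const by (simp add: LIMSEQ_const_iff)
  then show False
    using dyadic_below_bounds(1)[where x=x and n=N] by (simp add: field_simps)
qed

lemma beta_bin_val: "infinite {n. b n} \<Longrightarrow> beta (bin_val b) = b"
  unfolding beta_def by (rule the_equality) (auto intro: bin_val_inj)

lemma beta_eq_bin_digit: "0 < x \<Longrightarrow> x \<le> 1 \<Longrightarrow> beta x = bin_digit x"
  using beta_bin_val[OF infinite_bin_digit] bin_val_bin_digit by metis

lemma ex_bin_val_eq:
  assumes "y \<in> {0..1}"
  shows "\<exists>b. bin_val b = y"
proof (cases "y = 0")
  case True
  then show ?thesis
    by (intro exI[of _ "\<lambda>_. False"]) (simp add: bin_val_def)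
next
  case False
  then show ?thesis
    using assms by (intro exI[of _ "beta y"]) (simp add: beta_eq_bin_digit bin_val_bin_digit)
qed

section \<open>Measurability of \<open>R\<close>\<close>

fun nth_true :: "(nat \<Rightarrow> bool) \<Rightarrow> nat \<Rightarrow> nat" where
  "nth_true b 0 = (LEAST n. b n)"
| "nth_true b (Suc k) = (LEAST n. nth_true b k < n \<and> b n)"

lemma nth_true_eq_enumerate: "infinite {n. b n} \<Longrightarrow> nth_true b k = enumerate {n. b n} k"
  by (induction k) (simp_all add: enumerate_0 enumerate_Suc'' conj_commute)

lemma measurable_nth_true [measurable]:
  assumes [measurable]: "\<And>n. Measurable.pred M (\<lambda>x. f x n)"
  shows "(\<lambda>x. nth_true (f x) k) \<in> measurable M (count_space UNIV)"
proof (induction k)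
  case 0
  show ?case unfolding nth_true.simps by measurable
next
  case (Suc k)
  note [measurable] = Suc
  show ?case unfolding nth_true.simps by measurable
qed

lemma borel_measurable_bin_val [measurable]:
  assumes [measurable]: "\<And>n. Measurable.pred M (\<lambda>x. f x n)"
  shows "(\<lambda>x. bin_val (f x)) \<in> borel_measurable M"
  unfolding bin_val_def by measurable

lemma pred_bin_digit [measurable]: "Measurable.pred borel (\<lambda>x. bin_digit x n)"
  unfolding bin_digit_def dyadic_below_def by measurable

lemma rho_beta: "0 < x \<Longrightarrow> x \<le> 1 \<Longrightarrow> rho (beta x) = (\<lambda>k. odd (nth_true (bin_digit x) k))"
  by (simp add: rho_def beta_eq_bin_digit nth_true_eq_enumerate infinite_bin_digit)

lemma R_measurable: "R \<in> borel_measurable (lebesgue_on {0..1})"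
proof -
  let ?R = "\<lambda>x. if x = 0 then 2/3 else bin_val (\<lambda>k. odd (nth_true (bin_digit x) k))"
  have "?R \<in> borel_measurable borel"
    by measurable
  then have "?R \<in> borel_measurable (lebesgue_on {0..1})"
    by (intro measurable_restrict_space1 measurable_completion) simp
  then show ?thesis
    by (rule measurable_cong[THEN iffD1, rotated]) (auto simp: R_def rho_beta)
qed

section \<open>Greedy preimages and the maximal section \<open>S\<close>\<close>

definition word_of_positions :: "(nat \<Rightarrow> nat) \<Rightarrow> nat \<Rightarrow> bool" where
  "word_of_positions p n \<longleftrightarrow> n \<in> range p"

lemma enumerate_range_strict_mono:
  assumes "strict_mono (p :: nat \<Rightarrow> nat)"
  shows "enumerate (range p) k = p k"
proof (induction k)
  case 0
  show ?case
    unfolding enumerate_0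
    by (rule Least_equality) (auto simp: strict_mono_less_eq[OF assms])
next
  case (Suc k)
  have "infinite (range p)"
    using range_inj_infinite[OF strict_mono_imp_inj_on[OF assms]] .
  then show ?case
    unfolding enumerate_Suc''[OF \<open>infinite (range p)\<close>] Suc
    by (intro Least_equality)
      (auto simp: strict_mono_less[OF assms] strict_mono_less_eq[OF assms] Suc_le_eq)
qed

lemma infinite_word_of_positions: "strict_mono p \<Longrightarrow> infinite {n. word_of_positions p n}"
  unfolding word_of_positions_def using range_inj_infinite[OF strict_mono_imp_inj_on] by simp

lemma rho_word_of_positions: "strict_mono p \<Longrightarrow> rho (word_of_positions p) = (\<lambda>k. odd (p k))"
  by (simp add: rho_def word_of_positions_def enumerate_range_strict_mono)

lemma word_of_positions_enumerate:
  "infinite {n. b n} \<Longrightarrow> word_of_positions (enumerate {n. b n}) = b"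
  by (rule ext) (simp add: word_of_positions_def range_enumerate)

lemma sums_bin_val_word_of_positions:
  assumes "strict_mono p"
  shows "(\<lambda>k. (1/2) ^ Suc (p k)) sums bin_val (word_of_positions p)"
proof -
  have "bin_term (word_of_positions p) sums bin_val (word_of_positions p)"
    unfolding bin_val_eq_suminf using summable_bin_term by (rule summable_sums)
  then have "(\<lambda>k. bin_term (word_of_positions p) (p k)) sums bin_val (word_of_positions p)"
    by (subst sums_mono_reindex[OF assms]) (auto simp: bin_term_def word_of_positions_def)
  then show ?thesis
    by (simp add: bin_term_def word_of_positions_def power_divide)
qed

lemma bin_val_word_of_positions_antimono:
  assumes "strict_mono p" "strict_mono q" "\<And>k. q k \<le> p k"
  shows "bin_val (word_of_positions p) \<le> bin_val (word_of_positions q)"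
  by (rule sums_le[OF _ sums_bin_val_word_of_positions[OF assms(1)]
        sums_bin_val_word_of_positions[OF assms(2)]])
    (simp add: power_decreasing assms(3))

fun greedy_positions :: "(nat \<Rightarrow> bool) \<Rightarrow> nat \<Rightarrow> nat" where
  "greedy_positions c 0 = (if c 0 then 1 else 0)"
| "greedy_positions c (Suc k) =
    (if odd (Suc (greedy_positions c k)) \<longleftrightarrow> c (Suc k)
     then Suc (greedy_positions c k) else Suc (Suc (greedy_positions c k)))"

lemma strict_mono_greedy_positions: "strict_mono (greedy_positions c)"
  by (rule strict_monoI_Suc) simp

lemma odd_greedy_positions: "odd (greedy_positions c k) \<longleftrightarrow> c k"
  by (induction k) auto

lemma greedy_positions_le:
  assumes "strict_mono p" "\<And>k. odd (p k) \<longleftrightarrow> c k"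
  shows "greedy_positions c k \<le> p k"
proof (induction k)
  case 0
  show ?case
    using assms(2)[of 0] by (auto simp: Suc_le_eq intro: odd_pos)
next
  case (Suc k)
  have "greedy_positions c k < p (Suc k)"
    using Suc.IH strict_monoD[OF assms(1), of k "Suc k"] by simp
  moreover have "p (Suc k) \<noteq> Suc (greedy_positions c k)"
    if "odd (Suc (greedy_positions c k)) \<noteq> c (Suc k)"
    using that assms(2)[of "Suc k"] by auto
  ultimately show ?case
    by auto
qed

definition greedy_val :: "(nat \<Rightarrow> bool) \<Rightarrow> real" where
  "greedy_val c = bin_val (word_of_positions (greedy_positions c))"

lemma greedy_val_pos: "0 < greedy_val c"
  unfolding greedy_val_def word_of_positions_def by (rule bin_val_pos) (rule rangeI)

lemma beta_greedy_val: "beta (greedy_val c) = word_of_positions (greedy_positions c)"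
  unfolding greedy_val_def
  by (rule beta_bin_val[OF infinite_word_of_positions[OF strict_mono_greedy_positions]])

lemma R_greedy_val: "R (greedy_val c) = bin_val c"
  using greedy_val_pos[of c]
  by (simp add: R_def beta_greedy_val rho_word_of_positions strict_mono_greedy_positions
      odd_greedy_positions)

lemma le_greedy_val_rho_beta:
  assumes "0 < x" "x \<le> 1"
  shows "x \<le> greedy_val (rho (beta x))"
proof -
  define q where "q = enumerate {n. beta x n}"
  have inf: "infinite {n. beta x n}"
    using assms by (simp add: beta_eq_bin_digit infinite_bin_digit)
  then have q: "strict_mono q"
    unfolding q_def by (rule strict_mono_enumerate)
  have "word_of_positions q = beta x"
    unfolding q_def by (rule word_of_positions_enumerate[OF inf])
  then have "x = bin_val (word_of_positions q)"
    using assms by (simp add: beta_eq_bin_digit bin_val_bin_digit)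
  also have "\<dots> \<le> greedy_val (rho (beta x))"
    unfolding greedy_val_def
    by (intro bin_val_word_of_positions_antimono q strict_mono_greedy_positions greedy_positions_le)
      (simp add: rho_def q_def)
  finally show ?thesis .
qed

text \<open>The maximum of a fiber is found among the greedy values of the (at most two) binary
  expansions of the target; the junk value \<open>R 0\<close> does not matter since \<open>greedy_val\<close> is positive.\<close>

lemma fiber_greatest_greedy_val:
  assumes "y \<in> {0..1}"
  obtains c where "greedy_val c \<in> {x \<in> {0..1}. R x = y}"
    "\<forall>x \<in> {x \<in> {0..1}. R x = y}. x \<le> greedy_val c"
proof -
  let ?C = "{c. bin_val c = y}"
  have "?C \<noteq> {}"
    using ex_bin_val_eq[OF assms] by blast
  then have "Max (greedy_val ` ?C) \<in> greedy_val ` ?C"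
    by (intro Max_in finite_imageI finite_bin_val_fiber) simp
  then obtain c where c: "c \<in> ?C" "greedy_val c = Max (greedy_val ` ?C)"
    by (metis imageE)
  show ?thesis
  proof (rule that)
    show "greedy_val c \<in> {x \<in> {0..1}. R x = y}"
      using c(1) greedy_val_pos[of c] bin_val_le_1 R_greedy_val[of c]
      unfolding greedy_val_def by (simp add: less_imp_le)
    show "\<forall>x \<in> {x \<in> {0..1}. R x = y}. x \<le> greedy_val c"
    proof
      fix x assume "x \<in> {x \<in> {0..1}. R x = y}"
      then have x: "0 \<le> x" "x \<le> 1" "R x = y"
        by auto
      show "x \<le> greedy_val c"
      proof (cases "x = 0")
        case True
        then show ?thesis using greedy_val_pos[of c] by simp
      next
        case False
        then have "rho (beta x) \<in> ?C"
          using x by (simp add: R_def)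
        then have "greedy_val (rho (beta x)) \<le> greedy_val c"
          unfolding c(2) by (intro Max_ge finite_imageI finite_bin_val_fiber imageI)
        then show ?thesis
          using le_greedy_val_rho_beta[of x] x False by simp
      qed
    qed
  qed
qed

lemma S_greatest_greedy_val:
  assumes "y \<in> {0..1}"
  shows "S y \<in> {x \<in> {0..1}. R x = y}" "\<forall>x \<in> {x \<in> {0..1}. R x = y}. x \<le> S y"
    and "S y \<in> range greedy_val"
proof -
  obtain c where c: "greedy_val c \<in> {x \<in> {0..1}. R x = y}"
    "\<forall>x \<in> {x \<in> {0..1}. R x = y}. x \<le> greedy_val c"
    using fiber_greatest_greedy_val[OF assms] .
  have "S y = greedy_val c"
    unfolding S_def by (rule Greatest_equality) (use c in auto)
  with c show "S y \<in> {x \<in> {0..1}. R x = y}" "\<forall>x \<in> {x \<in> {0..1}. R x = y}. x \<le> S y"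
    "S y \<in> range greedy_val"
    by simp_all
qed

section \<open>Words without two consecutive zeros\<close>

definition no_adjacent_zeros :: "(nat \<Rightarrow> bool) \<Rightarrow> bool" where
  "no_adjacent_zeros b \<longleftrightarrow> (\<forall>i. b i \<or> b (Suc i))"

lemma not_normal2_if_no_adjacent_zeros:
  assumes "no_adjacent_zeros (digits x)"
  shows "x \<notin> normal2"
proof
  let ?blocks = "\<lambda>N. {i. i < N \<and> (\<forall>j<2. digits x (i + j) = [False, False] ! j)}"
  assume "x \<in> normal2"
  then have "(\<lambda>N. real (card (?blocks N)) / real N) \<longlonglongrightarrow> 1 / 2 ^ 2"
    unfolding normal2_def by (auto dest!: spec[of _ 2])
  moreover have "?blocks N = {}" for N
  proof -
    have "\<not> (\<forall>j<2. digits x (i + j) = [False, False] ! j)" for i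
    proof
      assume block: "\<forall>j<2. digits x (i + j) = [False, False] ! j"
      have "\<not> digits x i" "\<not> digits x (Suc i)"
        using block[rule_format, of 0] block[rule_format, of 1] by simp_all
      then show False
        using assms unfolding no_adjacent_zeros_def by blast
    qed
    then show ?thesis
      by blast
  qed
  ultimately have "(\<lambda>N. 0::real) \<longlonglongrightarrow> 1 / 2 ^ 2"
    by simp
  then show False
    by (simp add: LIMSEQ_const_iff)
qed

lemma no_adjacent_zeros_greedy_positions:
  "no_adjacent_zeros (word_of_positions (greedy_positions c))"
  unfolding no_adjacent_zeros_def
proof
  fix i
  have "\<exists>k. greedy_positions c k \<in> {i, Suc i}"
  proof (induction i)
    case 0
    show ?case by (intro exI[of _ 0]) simp
  next
    case (Suc i)
    then obtain k where k: "greedy_positions c k \<in> {i, Suc i}"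
      by blast
    show ?case
    proof (cases "greedy_positions c k = i")
      case True
      then have "greedy_positions c (Suc k) \<in> {Suc i, Suc (Suc i)}"
        by auto
      then show ?thesis
        by blast
    next
      case False
      with k show ?thesis
        by blast
    qed
  qed
  then show "word_of_positions (greedy_positions c) i \<or> word_of_positions (greedy_positions c) (Suc i)"
    unfolding word_of_positions_def by (metis insert_iff rangeI singletonD)
qed

lemma greedy_val_not_normal2: "greedy_val c \<notin> normal2"
  using greedy_val_pos[of c] no_adjacent_zeros_greedy_positions[of c]
  by (intro not_normal2_if_no_adjacent_zeros) (simp add: digits_def beta_greedy_val)

lemma negligible_if_interval_covers:
  fixes S :: "real set"
  assumes "0 \<le> r" "k * r < 1"
    and covers: "\<And>n. \<exists>L. finite L \<and> real (card L) \<le> k ^ n \<and> S \<subseteq> (\<Union>a\<in>L. {a..a + r ^ n})"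
  shows "negligible S"
  unfolding negligible_outer_le
proof (intro allI impI)
  fix e :: real
  assume "0 < e"
  then obtain n where n: "(k * r) ^ n < e"
    using real_arch_pow_inv assms(2) by blast
  obtain L where L: "finite L" "real (card L) \<le> k ^ n" "S \<subseteq> (\<Union>a\<in>L. {a..a + r ^ n})"
    using covers by blast
  have "measure lebesgue (\<Union>a\<in>L. {a..a + r ^ n}) \<le> (\<Sum>a\<in>L. measure lebesgue {a..a + r ^ n})"
    by (rule measure_UNION_le[OF L(1)]) simp
  also have "\<dots> = real (card L) * r ^ n"
    using assms(1) by simp
  also have "\<dots> \<le> k ^ n * r ^ n"
    using L(2) assms(1) by (simp add: mult_right_mono)
  finally have "measure lebesgue (\<Union>a\<in>L. {a..a + r ^ n}) \<le> e"
    using n by (simp add: power_mult_distrib)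
  moreover have "(\<Union>a\<in>L. {a..a + r ^ n}) \<in> lmeasurable"
    using L(1) by (intro fmeasurable.finite_UN) simp_all
  ultimately show "\<exists>T. S \<subseteq> T \<and> T \<in> lmeasurable \<and> measure lebesgue T \<le> e"
    using L(3) by blast
qed

text \<open>Two leading digits of a word without \<open>00\<close> contribute \<open>1/4\<close>, \<open>1/2\<close> or \<open>3/4\<close>, so the values
  of such words form a self-similar set with three pieces of ratio \<open>1/4\<close>.\<close>

lemma bin_val_no_adjacent_zeros_split:
  assumes "no_adjacent_zeros b"
  shows "\<exists>d \<in> {1/4, 1/2, 3/4}. \<exists>t. no_adjacent_zeros t \<and> bin_val b = d + bin_val t / 4"
proof (intro bexI exI conjI)
  let ?d = "(if b 0 then 1/2 else 0) + (if b 1 then 1/4 else 0) :: real"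
  show "?d \<in> {1/4, 1/2, 3/4}"
    using assms unfolding no_adjacent_zeros_def by (auto dest: spec[of _ 0])
  show "no_adjacent_zeros (\<lambda>i. b (Suc (Suc i)))"
    using assms unfolding no_adjacent_zeros_def by blast
  show "bin_val b = ?d + bin_val (\<lambda>i. b (Suc (Suc i))) / 4"
    using bin_val_shift[of b] bin_val_shift[of "\<lambda>i. b (Suc i)"] by simp
qed

lemma bin_val_no_adjacent_zeros_cover:
  "\<exists>L. finite L \<and> card L \<le> 3 ^ n \<and>
    bin_val ` Collect no_adjacent_zeros \<subseteq> (\<Union>a\<in>L. {a..a + (1/4) ^ n})"
proof (induction n)
  case 0
  show ?case
    using bin_val_nonneg bin_val_le_1 by (intro exI[of _ "{0}"]) auto
next
  case (Suc n)
  then obtain L where L: "finite L" "card L \<le> 3 ^ n"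
    "bin_val ` Collect no_adjacent_zeros \<subseteq> (\<Union>a\<in>L. {a..a + (1/4) ^ n})"
    by blast
  let ?D = "{1/4, 1/2, 3/4 :: real}"
  let ?L = "\<Union>d\<in>?D. (\<lambda>a. d + a / 4) ` L"
  have "card ?L \<le> (\<Sum>d\<in>?D. card ((\<lambda>a. d + a / 4) ` L))"
    by (rule card_UN_le) simp
  also have "\<dots> \<le> (\<Sum>d\<in>?D. card L)"
    by (intro sum_mono card_image_le L(1))
  also have "\<dots> \<le> 3 ^ Suc n"
    using L(2) by simp
  finally have card: "card ?L \<le> 3 ^ Suc n" .
  have "bin_val b \<in> (\<Union>a\<in>?L. {a..a + (1/4) ^ Suc n})" if b: "no_adjacent_zeros b" for b
  proof -
    obtain d t where d: "d \<in> ?D" and t: "no_adjacent_zeros t" "bin_val b = d + bin_val t / 4"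
      using bin_val_no_adjacent_zeros_split[OF b] by blast
    have "bin_val t \<in> (\<Union>a\<in>L. {a..a + (1/4) ^ n})"
      using L(3) t(1) by blast
    then obtain a where a: "a \<in> L" "a \<le> bin_val t" "bin_val t \<le> a + (1/4) ^ n"
      by auto
    show ?thesis
    proof (rule UN_I)
      show "d + a / 4 \<in> ?L"
        using d a(1) by blast
      show "bin_val b \<in> {d + a / 4..d + a / 4 + (1/4) ^ Suc n}"
        using t(2) a(2,3) by simp
    qed
  qed
  then have "bin_val ` Collect no_adjacent_zeros \<subseteq> (\<Union>a\<in>?L. {a..a + (1/4) ^ Suc n})"
    by blast
  moreover have "finite ?L"
    using L(1) by simp
  ultimately show ?case
    using card by blast
qed

lemma negligible_bin_val_no_adjacent_zeros: "negligible (bin_val ` Collect no_adjacent_zeros)"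
proof (rule negligible_if_interval_covers[of "1/4" 3])
  fix n
  obtain L where "finite L" "card L \<le> 3 ^ n"
    "bin_val ` Collect no_adjacent_zeros \<subseteq> (\<Union>a\<in>L. {a..a + (1/4) ^ n})"
    using bin_val_no_adjacent_zeros_cover by blast
  then show "\<exists>L. finite L \<and> real (card L) \<le> 3 ^ n \<and>
      bin_val ` Collect no_adjacent_zeros \<subseteq> (\<Union>a\<in>L. {a..a + (1/4) ^ n})"
    by (intro exI[of _ L]) (simp add: of_nat_le_iff[symmetric])
qed simp_all

section \<open>A Vitali set\<close>

definition vitali_rep :: "real \<Rightarrow> real" where
  "vitali_rep x = (SOME y. y \<in> {0..1} \<and> x - y \<in> \<rat>)"

definition vitali_set :: "real set" where
  "vitali_set = range vitali_rep"

lemma vitali_rep: "vitali_rep x \<in> {0..1} \<and> x - vitali_rep x \<in> \<rat>"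
  unfolding vitali_rep_def
proof (rule someI)
  show "frac x \<in> {0..1} \<and> x - frac x \<in> \<rat>"
    using frac_ge_0[of x] frac_lt_1[of x] by (auto simp: frac_def)
qed

lemma vitali_rep_cong:
  assumes "x - x' \<in> \<rat>"
  shows "vitali_rep x = vitali_rep x'"
proof -
  have "x - y \<in> \<rat> \<longleftrightarrow> x' - y \<in> \<rat>" for y
    using Rats_add[OF assms] Rats_diff[OF _ assms] by (metis add_diff_cancel_left' diff_add_cancel diff_diff_eq2)
  then show ?thesis
    unfolding vitali_rep_def by simp
qed

lemma vitali_set_subset: "vitali_set \<subseteq> {0..1}"
  unfolding vitali_set_def using vitali_rep by blast

lemma vitali_set_rational_diff:
  assumes "u \<in> vitali_set" "v \<in> vitali_set" "u - v \<in> \<rat>"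
  shows "u = v"
proof -
  obtain x x' where u: "u = vitali_rep x" and v: "v = vitali_rep x'"
    using assms(1,2) unfolding vitali_set_def by blast
  have "x - x' = (x - vitali_rep x) + (u - v) - (x' - vitali_rep x')"
    using u v by simp
  then have "x - x' \<in> \<rat>"
    using vitali_rep[of x] vitali_rep[of x'] assms(3) by (metis Rats_add Rats_diff)
  then show ?thesis
    using u v vitali_rep_cong by simp
qed

lemma not_negligible_vitali_set: "\<not> negligible vitali_set"
proof
  assume "negligible vitali_set"
  then have "negligible (\<Union>q\<in>\<rat>. (+) q ` vitali_set)"
    using countable_rat by (intro negligible_countable_Union) (auto intro: negligible_translation)
  moreover have "UNIV \<subseteq> (\<Union>q\<in>\<rat>. (+) q ` vitali_set)"
  proof
    fix x :: real
    have "x = (x - vitali_rep x) + vitali_rep x"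
      by simp
    then show "x \<in> (\<Union>q\<in>\<rat>. (+) q ` vitali_set)"
      using vitali_rep[of x] unfolding vitali_set_def by blast
  qed
  ultimately show False
    using negligible_subset non_negligible_UNIV by blast
qed

text \<open>Translates of \<open>vitali_set\<close> by distinct rationals in \<open>[0, 1]\<close> are disjoint subsets of
  \<open>[0, 2]\<close>, so the measure of \<open>vitali_set\<close> cannot be positive.\<close>

lemma vitali_set_measure_le:
  assumes "vitali_set \<in> lmeasurable"
  shows "real N * measure lebesgue vitali_set \<le> 2"
proof -
  let ?T = "\<lambda>j::nat. (+) (1 / real (Suc j)) ` vitali_set"
  have disjoint: "pairwise (\<lambda>i j. disjnt (?T i) (?T j)) {..<N}"
  proof (rule pairwiseI)
    fix i j :: nat
    assume "i \<noteq> j"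
    show "disjnt (?T i) (?T j)"
      unfolding disjnt_def
    proof (rule equals0I)
      fix z assume "z \<in> ?T i \<inter> ?T j"
      then obtain u v where uv: "u \<in> vitali_set" "v \<in> vitali_set"
        "z = 1 / real (Suc i) + u" "z = 1 / real (Suc j) + v"
        by blast
      then have "u - v = 1 / real (Suc j) - 1 / real (Suc i)"
        by simp
      then have "u = v"
        using uv(1,2) by (intro vitali_set_rational_diff) simp_all
      then show False
        using uv(3,4) \<open>i \<noteq> j\<close> by simp
    qed
  qed
  have "real N * measure lebesgue vitali_set = measure lebesgue (\<Union>j<N. ?T j)"
    using measure_UNION'[OF _ measurable_translation[OF assms] disjoint]
    by (simp add: measure_translation)
  also have "\<dots> \<le> measure lebesgue {0..2::real}"
  proof (rule measure_mono_fmeasurable)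
    show "(\<Union>j<N. ?T j) \<subseteq> {0..2}"
    proof
      fix z assume "z \<in> (\<Union>j<N. ?T j)"
      then obtain j u where u: "u \<in> vitali_set" and z: "z = 1 / real (Suc j) + u"
        by blast
      have "0 \<le> 1 / real (Suc j)" "1 / real (Suc j) \<le> 1" "0 \<le> u" "u \<le> 1"
        using u vitali_set_subset by auto
      then show "z \<in> {0..2}"
        unfolding z atLeastAtMost_iff by linarith
    qed
  qed (auto intro!: fmeasurableD fmeasurable.finite_UN measurable_translation[OF assms])
  also have "\<dots> = 2"
    by simp
  finally show ?thesis .
qed

lemma vitali_set_not_lebesgue: "vitali_set \<notin> sets lebesgue"
proof
  assume "vitali_set \<in> sets lebesgue"
  moreover have "{0..1::real} \<in> lmeasurable"
    using lmeasurable_cbox[of 0 "1::real"] by simp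
  ultimately have meas: "vitali_set \<in> lmeasurable"
    using vitali_set_subset by (blast intro: fmeasurableI2)
  have "0 < measure lebesgue vitali_set"
    using not_negligible_vitali_set meas negligible_iff_measure measure_nonneg
    by (metis less_eq_real_def)
  moreover obtain N :: nat where "2 / measure lebesgue vitali_set < real N"
    using reals_Archimedean2 by blast
  ultimately show False
    using vitali_set_measure_le[OF meas, of N] by (simp add: field_simps)
qed

theorem proposition5p1:
  shows "R \<in> borel_measurable (lebesgue_on {0..1})
    \<and> (\<forall>y\<in>{0..1}. {x \<in> {0..1}. R x = y} \<noteq> {}
         \<and> (\<exists>m \<in> {x \<in> {0..1}. R x = y}. \<forall>x \<in> {x \<in> {0..1}. R x = y}. x \<le> m)
         \<and> S y \<in> {x \<in> {0..1}. R x = y}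
         \<and> (\<forall>x \<in> {x \<in> {0..1}. R x = y}. x \<le> S y))
    \<and> S ` {0..1} \<subseteq> {0..1} - normal2
    \<and> S ` {0..1} \<in> null_sets lebesgue
    \<and> (\<forall>y\<in>{0..1}. R (S y) = y)
    \<and> (\<exists>E. E \<subseteq> {0..1} \<and> E \<in> null_sets lebesgue \<and> R ` E \<notin> sets lebesgue)"
proof -
  note S_greatest = S_greatest_greedy_val(1,2) and S_greedy = S_greatest_greedy_val(3)
  have fibers: "\<forall>y\<in>{0..1}. {x \<in> {0..1}. R x = y} \<noteq> {}
      \<and> (\<exists>m \<in> {x \<in> {0..1}. R x = y}. \<forall>x \<in> {x \<in> {0..1}. R x = y}. x \<le> m)
      \<and> S y \<in> {x \<in> {0..1}. R x = y} \<and> (\<forall>x \<in> {x \<in> {0..1}. R x = y}. x \<le> S y)"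
    using S_greatest by blast
  then have R_S: "\<forall>y\<in>{0..1}. R (S y) = y"
    by blast
  have S_not_normal: "S ` {0..1} \<subseteq> {0..1} - normal2"
    using S_greatest(1) S_greedy greedy_val_not_normal2 by fastforce
  have "S ` {0..1} \<subseteq> bin_val ` Collect no_adjacent_zeros"
    using S_greedy no_adjacent_zeros_greedy_positions unfolding greedy_val_def by blast
  then have S_null: "negligible (S ` {0..1})"
    using negligible_bin_val_no_adjacent_zeros negligible_subset by blast
  have "S ` vitali_set \<subseteq> S ` {0..1}"
    using vitali_set_subset by blast
  moreover have "R ` S ` vitali_set = vitali_set"
    using R_S vitali_set_subset by (force simp: image_image)
  ultimately have "\<exists>E. E \<subseteq> {0..1} \<and> E \<in> null_sets lebesgue \<and> R ` E \<notin> sets lebesgue"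
    using S_not_normal S_null vitali_set_not_lebesgue
    by (intro exI[of _ "S ` vitali_set"]) (auto simp: negligible_iff_null_sets[symmetric] intro: negligible_subset)
  with R_measurable fibers S_not_normal S_null R_S show ?thesis
    by (simp add: negligible_iff_null_sets)
qed


end
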